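(* Let $K$ be a finite simplicial complex, let $q$ and $p$ be non-negative integers, and for each $m$ let $\{\sigma^{(m)}_1,\dots,\sigma^{(m)}_{f_m}\}$ be the $m$-simplices of $K$ ($f_m$ their number). Then for every $q$-simplex $\sigma_j^{(q)}$: (1) $$\deg^p_A(\sigma_j^{(q)})=\sum_{q'=p}^{\dim K}\sum_{k=1}^{f_{q'}} adj^p(\sigma_j^{(q)},\sigma_k^{(q')});$$ (2) $$\deg^{p^*}_A(\sigma_j^{(q)})=\deg^p_A(\sigma_j^{(q)})-\sum_{q'=p}^{\dim K}\sum_{k=1}^{f_{q'}}\Delta_{q',k},$$ where $$\Delta_{q',k}=\min\Big(1,\sum_{q''=q'+1}^{\dim K}\sum_{\ell=1}^{f_{q''}}|\operatorname{sig}_L(\sigma^{(q')}_k,\sigma_\ell^{(q'')};\sigma_k^{(q')})|\cdot adj^p(\sigma_j^{(q)},\sigma_\ell^{(q'')})\Big)\cdot adj^p(\sigma_j^{(q)},\sigma_k^{(q')}).$$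
   Context: $K$ is a finite abstract simplicial complex (finite family of nonempty finite vertex sets closed under nonempty subsets); a $q$-simplex has $q+1$ vertices; a face is a simplex of $K$ contained in a given simplex (a simplex is a face of itself); $\dim K$ is the maximal dimension of a simplex. Adjacencies: $\sigma^{(q)}\sim_{L_p}\sigma^{(q')}$ iff they have a common $p$-face; $\sigma^{(q)}\sim_{L_{p^*}}\sigma^{(q')}$ iff $\sigma^{(q)}\sim_{L_p}\sigma^{(q')}$ and $\sigma^{(q)}\not\sim_{L_{p+1}}\sigma^{(q')}$; $\sigma^{(q)}\sim_{U_p}\sigma^{(q')}$ iff some $p$-simplex of $K$ contains both. $p$-adjacency: $\sigma^{(q)}\sim_{A_p}\sigma^{(q')}$ iff $\sigma^{(q)}\sim_{L_{p^*}}\sigma^{(q')}$ and $\sigma^{(q)}\not\sim_{U_{p'}}\sigma^{(q')}$, where $p'=q+q'-p$. Maximal $p$-adjacency: $\sigma^{(q')}\sim_{A_{p^*}}\sigma^{(q)}$ iff $\sigma^{(q')}\sim_{A_p}\sigma^{(q)}$ and $\sigma^{(q')}\not\subset\sigma^{(q'')}$ for every simplex $\sigma^{(q'')}$ with $\sigma^{(q'')}\sim_{A_p}\sigma^{(q)}$. The $p$-adjacency degree is $\deg^p_A(\sigma^{(q)})=\#\{\sigma^{(q')}:\sigma^{(q)}\sim_{A_p}\sigma^{(q')}\}$ and the maximal $p$-adjacency degree is $\deg^{p^*}_A(\sigma^{(q)})=\#\{\sigma^{(q')}:\sigma^{(q')}\sim_{A_{p^*}}\sigma^{(q)}\}$ (over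 simplices of all dimensions $q'$). Indicator quantities: $m_L^p(\sigma,\sigma')=1$ if $\sigma,\sigma'$ have a common $p$-face and $0$ otherwise (equivalently $\min(1,\sum_i|\operatorname{sig}_L(\sigma,\sigma';\gamma_i^{(p)})|)$ over all $p$-simplices $\gamma_i^{(p)}$); $m_U^{p}(\sigma,\sigma')=1$ if some $p$-simplex contains both and $0$ otherwise. For $\sigma=\sigma^{(q)}$, $\sigma'=\sigma^{(q')}$ and $p'=q+q'-p$, $adj^p(\sigma,\sigma')=m^p_L(\sigma,\sigma')\big(1-m^{p+1}_L(\sigma,\sigma')\big)\big(1-m^{p'}_U(\sigma,\sigma')\big)$. Here $|\operatorname{sig}_L(\sigma,\sigma';\tau)|$ equals $1$ if $\tau\subseteq\sigma\cap\sigma'$ and $0$ otherwise; in particular $|\operatorname{sig}_L(\sigma_k^{(q')},\sigma_\ell^{(q'')};\sigma_k^{(q')})|=1$ iff $\sigma_k^{(q')}\subseteq\sigma_\ell^{(q'')}$. *)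

theory Defs
  imports Main
begin

definition simplicial_complex :: "'a set set \<Rightarrow> bool" where
  "simplicial_complex K \<longleftrightarrow> finite K \<and> (\<forall>s\<in>K. finite s \<and> s \<noteq> {}) \<and>
     (\<forall>s\<in>K. \<forall>t. t \<subseteq> s \<and> t \<noteq> {} \<longrightarrow> t \<in> K)"

definition sdim :: "'a set \<Rightarrow> nat" where
  "sdim s = card s - 1"

definition simplices :: "'a set set \<Rightarrow> nat \<Rightarrow> 'a set set" where
  "simplices K q = {s \<in> K. card s = q + 1}"

definition cdim :: "'a set set \<Rightarrow> nat" where
  "cdim K = Max (sdim ` K)"

definition L_adj :: "'a set set \<Rightarrow> nat \<Rightarrow> 'a set \<Rightarrow> 'a set \<Rightarrow> bool" where
  "L_adj K p s s' \<longleftrightarrow> (\<exists>t\<in>K. card t = p + 1 \<and> t \<subseteq> s \<and> t \<subseteq> s')"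

definition Lstar_adj :: "'a set set \<Rightarrow> nat \<Rightarrow> 'a set \<Rightarrow> 'a set \<Rightarrow> bool" where
  "Lstar_adj K p s s' \<longleftrightarrow> L_adj K p s s' \<and> \<not> L_adj K (p + 1) s s'"

definition U_adj :: "'a set set \<Rightarrow> nat \<Rightarrow> 'a set \<Rightarrow> 'a set \<Rightarrow> bool" where
  "U_adj K p s s' \<longleftrightarrow> (\<exists>t\<in>K. card t = p + 1 \<and> s \<subseteq> t \<and> s' \<subseteq> t)"

definition A_adj :: "'a set set \<Rightarrow> nat \<Rightarrow> 'a set \<Rightarrow> 'a set \<Rightarrow> bool" where
  "A_adj K p s s' \<longleftrightarrow> Lstar_adj K p s s' \<and> \<not> U_adj K (sdim s + sdim s' - p) s s'"

definition Astar_adj :: "'a set set \<Rightarrow> nat \<Rightarrow> 'a set \<Rightarrow> 'a set \<Rightarrow> bool" where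
  "Astar_adj K p s' s \<longleftrightarrow> A_adj K p s' s \<and>
     (\<forall>s''\<in>K. A_adj K p s'' s \<longrightarrow> \<not> s' \<subset> s'')"

definition degA :: "'a set set \<Rightarrow> nat \<Rightarrow> 'a set \<Rightarrow> nat" where
  "degA K p s = card {s' \<in> K. A_adj K p s s'}"

definition degAstar :: "'a set set \<Rightarrow> nat \<Rightarrow> 'a set \<Rightarrow> nat" where
  "degAstar K p s = card {s' \<in> K. Astar_adj K p s' s}"

definition mL :: "'a set set \<Rightarrow> nat \<Rightarrow> 'a set \<Rightarrow> 'a set \<Rightarrow> nat" where
  "mL K p s s' = (if L_adj K p s s' then 1 else 0)"

definition mU :: "'a set set \<Rightarrow> nat \<Rightarrow> 'a set \<Rightarrow> 'a set \<Rightarrow> nat" where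
  "mU K p s s' = (if U_adj K p s s' then 1 else 0)"

definition adj :: "'a set set \<Rightarrow> nat \<Rightarrow> 'a set \<Rightarrow> 'a set \<Rightarrow> nat" where
  "adj K p s s' = mL K p s s' * (1 - mL K (p + 1) s s') *
      (1 - mU K (sdim s + sdim s' - p) s s')"

definition sigL_abs :: "'a set \<Rightarrow> 'a set \<Rightarrow> 'a set \<Rightarrow> nat" where
  "sigL_abs s s' t = (if t \<subseteq> s \<inter> s' then 1 else 0)"

end

theory Submission
  imports Defs
begin

text \<open>Both formulas are indicator sums. The factor \<open>adj\<close> is exactly the indicator of
p-adjacency to \<open>\<sigma>\<close>, and a p-adjacent simplex has dimension at least p, so summing it over
all simplices of dimension \<open>p .. dim K\<close> counts the p-adjacent simplices. In \<open>\<Delta>\<close>, the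
inner sum counts the p-adjacent simplices of higher dimension containing \<open>\<sigma>\<^sub>k\<close>, i.e. those
properly containing it; truncating with \<open>min 1\<close> and multiplying by \<open>adj\<close> yields the
indicator of being p-adjacent but not maximally so. Since maximal p-adjacency implies
p-adjacency, the \<open>\<Delta>\<close> sum is the difference of the two degrees.\<close>

lemma adj_eq_of_bool_A_adj: "adj K p s s' = of_bool (A_adj K p s s')"
  unfolding adj_def mL_def mU_def A_adj_def Lstar_adj_def by auto

lemma A_adj_commute: "A_adj K p s s' \<longleftrightarrow> A_adj K p s' s"
  unfolding A_adj_def Lstar_adj_def L_adj_def U_adj_def by (auto simp: add.commute)

lemma Astar_adj_imp_A_adj: "Astar_adj K p s' s \<Longrightarrow> A_adj K p s s'"
  unfolding Astar_adj_def by (simp add: A_adj_commute)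

lemma not_Astar_adj_iff:
  assumes "A_adj K p s s'"
  shows "\<not> Astar_adj K p s' s \<longleftrightarrow> (\<exists>s''\<in>K. A_adj K p s s'' \<and> s' \<subset> s'')"
  using assms unfolding Astar_adj_def by (auto simp: A_adj_commute)

lemma simplicial_complex_finite: "simplicial_complex K \<Longrightarrow> finite K"
  unfolding simplicial_complex_def by blast

lemma simplex_finite: "simplicial_complex K \<Longrightarrow> s \<in> K \<Longrightarrow> finite s"
  unfolding simplicial_complex_def by auto

lemma card_simplex_eq_sdim_Suc:
  assumes "simplicial_complex K" "s \<in> K"
  shows "card s = sdim s + 1"
proof -
  have "finite s" "s \<noteq> {}"
    using assms unfolding simplicial_complex_def by auto
  then show ?thesis
    unfolding sdim_def by (simp add: card_gt_0_iff)
qed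

lemma sdim_le_cdim: "simplicial_complex K \<Longrightarrow> s \<in> K \<Longrightarrow> sdim s \<le> cdim K"
  unfolding cdim_def by (simp add: simplicial_complex_finite)

lemma sum_simplices_from_dim:
  fixes f :: "'a set \<Rightarrow> 'b::comm_monoid_add"
  assumes K: "simplicial_complex K"
  shows "(\<Sum>q'=a..cdim K. \<Sum>s\<in>simplices K q'. f s) = (\<Sum>s\<in>{s\<in>K. a \<le> sdim s}. f s)"
proof -
  have "{s\<in>K. a \<le> sdim s} = (\<Union>q'\<in>{a..cdim K}. simplices K q')"
    using card_simplex_eq_sdim_Suc[OF K] sdim_le_cdim[OF K]
    unfolding simplices_def by (fastforce simp: sdim_def)
  moreover have "(\<Sum>s\<in>(\<Union>q'\<in>{a..cdim K}. simplices K q'). f s)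
      = (\<Sum>q'=a..cdim K. \<Sum>s\<in>simplices K q'. f s)"
    by (rule sum.UNION_disjoint) (auto simp: simplices_def simplicial_complex_finite[OF K])
  ultimately show ?thesis by simp
qed

lemma L_adj_imp_le_sdim:
  assumes K: "simplicial_complex K" and "s' \<in> K" "L_adj K p s s'"
  shows "p \<le> sdim s'"
proof -
  obtain t where "card t = p + 1" "t \<subseteq> s'"
    using assms(3) unfolding L_adj_def by blast
  moreover have "finite s'" using K \<open>s' \<in> K\<close> by (rule simplex_finite)
  ultimately have "p + 1 \<le> card s'" by (metis card_mono)
  then show ?thesis using card_simplex_eq_sdim_Suc[OF K \<open>s' \<in> K\<close>] by simp
qed

lemma A_adj_imp_le_sdim:
  "simplicial_complex K \<Longrightarrow> s' \<in> K \<Longrightarrow> A_adj K p s s' \<Longrightarrow> p \<le> sdim s'"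
  unfolding A_adj_def Lstar_adj_def using L_adj_imp_le_sdim by blast

lemma psubset_simplex_iff:
  assumes K: "simplicial_complex K" and "s \<in> simplices K q" "s' \<in> K"
  shows "s \<subset> s' \<longleftrightarrow> s \<subseteq> s' \<and> q < sdim s'"
proof -
  have "card s = q + 1" using assms(2) unfolding simplices_def by simp
  moreover have "card s' = sdim s' + 1" by (rule card_simplex_eq_sdim_Suc[OF K \<open>s' \<in> K\<close>])
  moreover have "s \<subset> s' \<longleftrightarrow> s \<subseteq> s' \<and> card s < card s'"
    using simplex_finite[OF K \<open>s' \<in> K\<close>] psubset_card_mono by auto
  ultimately show ?thesis by simp
qed

lemma sum_adj_eq_degA:
  assumes K: "simplicial_complex K"
  shows "(\<Sum>q'=p..cdim K. \<Sum>s'\<in>simplices K q'. adj K p \<sigma> s') = degA K p \<sigma>"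
proof -
  have "{s\<in>K. p \<le> sdim s} \<inter> {s. A_adj K p \<sigma> s} = {s\<in>K. A_adj K p \<sigma> s}"
    using A_adj_imp_le_sdim[OF K] by blast
  then show ?thesis
    unfolding sum_simplices_from_dim[OF K] adj_eq_of_bool_A_adj degA_def
    by (simp add: simplicial_complex_finite[OF K])
qed

lemma sigL_abs_self: "sigL_abs s s' s = of_bool (s \<subseteq> s')"
  unfolding sigL_abs_def by auto

lemma min_1_sum_sigL_abs_adj:
  assumes K: "simplicial_complex K" and s: "s \<in> simplices K q'"
  shows "min 1 (\<Sum>q''=q'+1..cdim K. \<Sum>sl\<in>simplices K q''. sigL_abs s sl s * adj K p \<sigma> sl)
           = of_bool (\<exists>sl\<in>K. A_adj K p \<sigma> sl \<and> s \<subset> sl)"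
proof -
  let ?larger = "{sl\<in>K. A_adj K p \<sigma> sl \<and> s \<subset> sl}"
  have "{sl\<in>K. q' + 1 \<le> sdim sl} \<inter> {sl. s \<subseteq> sl \<and> A_adj K p \<sigma> sl} = ?larger"
    using psubset_simplex_iff[OF K s] by (auto simp: Suc_le_eq)
  then have "(\<Sum>q''=q'+1..cdim K. \<Sum>sl\<in>simplices K q''. sigL_abs s sl s * adj K p \<sigma> sl)
      = card ?larger"
    unfolding sum_simplices_from_dim[OF K] sigL_abs_self adj_eq_of_bool_A_adj
      of_bool_conj[symmetric]
    by (simp add: simplicial_complex_finite[OF K])
  moreover have "min 1 (card ?larger) = of_bool (?larger \<noteq> {})"
    using simplicial_complex_finite[OF K]
    by (cases "?larger = {}") (auto simp: min_absorb1 Suc_leI card_gt_0_iff)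
  ultimately show ?thesis by (simp add: Bex_def)
qed

lemma sum_Delta_eq_degA_diff_degAstar:
  assumes K: "simplicial_complex K"
  shows "(\<Sum>q'=p..cdim K. \<Sum>s\<in>simplices K q'. of_bool (A_adj K p \<sigma> s \<and> \<not> Astar_adj K p s \<sigma>))
           = int (degA K p \<sigma>) - int (degAstar K p \<sigma>)"
proof -
  let ?B = "{s\<in>K. A_adj K p \<sigma> s}" and ?C = "{s\<in>K. Astar_adj K p s \<sigma>}"
  have "?C \<subseteq> ?B" by (auto dest: Astar_adj_imp_A_adj)
  moreover have "finite ?B" using simplicial_complex_finite[OF K] by simp
  moreover have "{s\<in>K. p \<le> sdim s} \<inter> {s. A_adj K p \<sigma> s \<and> \<not> Astar_adj K p s \<sigma>} = ?B - ?C"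
    using A_adj_imp_le_sdim[OF K] by blast
  ultimately show ?thesis
    unfolding sum_simplices_from_dim[OF K] degA_def degAstar_def
    by (simp add: simplicial_complex_finite[OF K] card_Diff_subset card_mono of_nat_diff
        finite_subset)
qed

theorem theoremt:
  fixes K :: "'a set set" and p q :: nat and \<sigma> :: "'a set"
  assumes "simplicial_complex K"
    and "\<sigma> \<in> simplices K q"
  shows "degA K p \<sigma> = (\<Sum>q'=p..cdim K. \<Sum>s'\<in>simplices K q'. adj K p \<sigma> s') \<and>
         int (degAstar K p \<sigma>) = int (degA K p \<sigma>) -
           (\<Sum>q'=p..cdim K. \<Sum>sk\<in>simplices K q'.
              int (min 1 (\<Sum>q''=q'+1..cdim K. \<Sum>sl\<in>simplices K q''.
                    sigL_abs sk sl sk * adj K p \<sigma> sl) * adj K p \<sigma> sk))"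
proof -
  have Delta_indicator: "int (min 1 (\<Sum>q''=q'+1..cdim K. \<Sum>sl\<in>simplices K q''.
                sigL_abs sk sl sk * adj K p \<sigma> sl) * adj K p \<sigma> sk)
          = of_bool (A_adj K p \<sigma> sk \<and> \<not> Astar_adj K p sk \<sigma>)"
    if "sk \<in> simplices K q'" for q' sk
    unfolding min_1_sum_sigL_abs_adj[OF assms(1) that]
    by (cases "A_adj K p \<sigma> sk") (simp_all add: adj_eq_of_bool_A_adj not_Astar_adj_iff)
  show ?thesis
    using Delta_indicator sum_adj_eq_degA[OF assms(1)]
      sum_Delta_eq_degA_diff_degAstar[OF assms(1)] by simp
qed

end
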